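(* Let $A$ be a real $3\times3$ matrix whose only eigenvalue is $\lambda$ (with algebraic multiplicity $3$), and let $h>0$. If $\lambda=0$, set $\psi=1$, $\phi=h$, $\theta=\tfrac12$. If $\lambda\neq0$, set $$\phi=(h-\lambda h^2)e^{\lambda h},\qquad \theta=\frac{h^2e^{\lambda h}}{2\phi^2},\qquad \psi=e^{\lambda h}-\lambda\phi-\theta\phi^2\lambda^2.$$ Then (whenever these expressions are defined) the explicit difference scheme $$\frac{\mathbf{x}_{k+1}-\psi\mathbf{x}_k}{\phi}=A\mathbf{x}_k+\theta\phi A^2\mathbf{x}_k$$ is exact for the system $\mathbf{x}'=A\mathbf{x}$.
   Context: A one-step difference scheme with step size $h>0$ for $\mathbf{x}'=M\mathbf{x}$ is called exact if for every initial vector $\mathbf{x}_0$ the sequence $(\mathbf{x}_k)$ it generates satisfies $\mathbf{x}_k=\mathbf{x}(kh)$ for all $k\ge 0$, where $\mathbf{x}(t)$ solves $\mathbf{x}'=M\mathbf{x}$, $\mathbf{x}(0)=\mathbf{x}_0$. *)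

theory Defs
  imports "HOL-Analysis.Analysis" "HOL-Computational_Algebra.Polynomial"
begin

definition charpoly :: "'a::field ^'n::finite^'n \<Rightarrow> 'a poly" where
  "charpoly M = det ((\<chi> i j. if i = j then [:0, 1:] else 0) - (\<chi> i j. [:M $ i $ j:]))"

text \<open>A one-step difference scheme is given as a relation S xs k between consecutive
  iterates xs k and xs (Suc k).\<close>
definition exact_scheme ::
  "((nat \<Rightarrow> real^'n::finite) \<Rightarrow> nat \<Rightarrow> bool) \<Rightarrow> real \<Rightarrow> real^'n^'n \<Rightarrow> bool" where
  "exact_scheme S h M \<longleftrightarrow>
     (\<forall>xs x. (\<forall>k. S xs k) \<and> x 0 = xs 0 \<and>
             (\<forall>t. (x has_vector_derivative (M *v x t)) (at t))
        \<longrightarrow> (\<forall>k. xs k = x (real k * h)))"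

end

theory Submission
  imports Defs
begin

text \<open>Write \<open>A = \<lambda> I + N\<close>. Since \<open>\<lambda>\<close> is the only eigenvalue, Cayley-Hamilton gives
  \<open>N\<^sup>3 = 0\<close>, so the flow of \<open>x' = A x\<close> is \<open>x(t) = e\<^sup>\<lambda>\<^sup>t (I + t N + t\<^sup>2/2 N\<^sup>2) x(0)\<close>.
  The scheme reads \<open>x\<^sub>k\<^sub>+\<^sub>1 = (\<psi> I + \<phi> A + \<theta> \<phi>\<^sup>2 A\<^sup>2) x\<^sub>k\<close>, and expanding \<open>A\<close> in powers of
  \<open>N\<close> shows that \<open>\<psi>, \<phi>, \<theta>\<close> are exactly the coefficients making this step matrix
  equal to the flow over time \<open>h\<close>. The semigroup law of the flow then gives
  \<open>x\<^sub>k = x(k h)\<close>.\<close>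

lemma poly_charpoly_3:
  fixes A :: "real^3^3"
  shows "poly (charpoly A) x = det (mat x - A)"
  unfolding charpoly_def det_3 mat_def by (simp add: poly_mult algebra_simps)

lemma nilpotent_if_det_mat_minus_eq_cube:
  fixes N :: "real^3^3"
  assumes det_eq: "\<And>y. det (mat y - N) = y ^ 3"
  shows "N ** N ** N = 0"
proof -
  text \<open>Cayley-Hamilton: \<open>N\<^sup>3 = tr N \<cdot> N\<^sup>2 - c \<cdot> N + det N \<cdot> I\<close>, where \<open>tr N\<close>, \<open>c\<close>, \<open>det N\<close>
    are read off as the coefficients of \<open>det (y I - N)\<close>, all zero here.\<close>
  define t where "t = N$1$1 + N$2$2 + N$3$3"
  define c where "c = N$1$1*N$2$2 - N$1$2*N$2$1 + N$1$1*N$3$3 - N$1$3*N$3$1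
                    + N$2$2*N$3$3 - N$2$3*N$3$2"
  have charpoly_coeffs: "det (mat y - N) = y^3 - t*y^2 + c*y - det N" for y
    unfolding det_3 t_def c_def mat_def by (simp add: algebra_simps power2_eq_square power3_eq_cube)
  have "det N = 0" using charpoly_coeffs[of 0] det_eq[of 0] by simp
  moreover have "c - t = 0" using charpoly_coeffs[of 1] det_eq[of 1] \<open>det N = 0\<close> by simp
  moreover have "- t - c = 0" using charpoly_coeffs[of "-1"] det_eq[of "-1"] \<open>det N = 0\<close> by simp
  ultimately have "t = 0" "c = 0" "det N = 0" by linarith+
  moreover
  have "(N ** N ** N) $ i $ j = t * (N ** N)$i$j - c * N$i$j + det N * mat 1 $ i $ j" for i j
    unfolding t_def c_def det_3 mat_def
    using exhaust_3[of i] exhaust_3[of j]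
    by (auto simp: matrix_matrix_mult_def sum_3 algebra_simps)
  ultimately show ?thesis by (simp add: vec_eq_iff)
qed

lemma nilpotent_if_charpoly_eq_cube:
  fixes A :: "real^3^3"
  assumes "charpoly A = [:-lam, 1:] ^ 3"
  shows "(A - mat lam) *v ((A - mat lam) *v ((A - mat lam) *v w)) = 0"
proof -
  have "det (mat y - (A - mat lam)) = y ^ 3" for y
  proof -
    have "det (mat y - (A - mat lam)) = det (mat (y + lam) - A)"
      by (rule arg_cong[where f = det]) (simp add: vec_eq_iff mat_def)
    also have "\<dots> = poly (charpoly A) (y + lam)"
      by (rule poly_charpoly_3[symmetric])
    also have "\<dots> = y ^ 3"
      using assms by (simp add: poly_power)
    finally show ?thesis .
  qed
  then show ?thesis
    by (simp add: nilpotent_if_det_mat_minus_eq_cube matrix_vector_mul_assoc matrix_mul_assoc)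
qed

lemma mat_vector_mult: "mat c *v v = c *\<^sub>R (v :: real^'n)"
  by (simp add: vec_eq_iff matrix_vector_mult_def mat_def if_distrib[where f="\<lambda>x. x * _"] cong: if_cong)

text \<open>\<open>exp (t N) v\<close> for a matrix with \<open>N\<^sup>3 = 0\<close>.\<close>
definition exp_nil3 :: "real^'n^'n \<Rightarrow> real \<Rightarrow> real^'n \<Rightarrow> real^'n" where
  "exp_nil3 N t v = v + t *\<^sub>R (N *v v) + (t\<^sup>2 / 2) *\<^sub>R (N *v (N *v v))"

lemma exp_nil3_zero [simp]: "exp_nil3 N 0 v = v"
  by (simp add: exp_nil3_def)

lemma exp_nil3_scaleR: "exp_nil3 N t (c *\<^sub>R v) = c *\<^sub>R exp_nil3 N t v"
  by (simp add: exp_nil3_def algebra_simps)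

lemma exp_nil3_add:
  assumes "\<And>w. N *v (N *v (N *v w)) = 0"
  shows "exp_nil3 N s (exp_nil3 N t v) = exp_nil3 N (s + t) v"
  by (simp add: exp_nil3_def assms algebra_simps vec_eq_iff power2_eq_square field_simps)

lemma has_vector_derivative_matrix_vector_mult [derivative_intros]:
  fixes M :: "real^'n^'m"
  shows "(f has_vector_derivative f') F \<Longrightarrow> ((\<lambda>t. M *v f t) has_vector_derivative M *v f') F"
  by (rule bounded_linear.has_vector_derivative) simp

lemma has_vector_derivative_exp_nil3_backward:
  fixes N :: "real^'n^'n"
  assumes N3: "\<And>w. N *v (N *v (N *v w)) = 0"
    and dx: "(x has_vector_derivative x') (at s)"
  shows "((\<lambda>t. exp (- lam * t) *\<^sub>R exp_nil3 N (- t) (x t)) has_vector_derivative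
           exp (- lam * s) *\<^sub>R exp_nil3 N (- s) (x' - lam *\<^sub>R x s - N *v x s)) (at s)"
  unfolding exp_nil3_def
  by (auto intro!: derivative_eq_intros dx
           simp: N3 algebra_simps vec_eq_iff power2_eq_square field_simps)

lemma linear_ode_solution_nilpotent:
  fixes A N :: "real^'n^'n" and x :: "real \<Rightarrow> real^'n"
  assumes N3: "\<And>w. N *v (N *v (N *v w)) = 0"
    and A_eq: "\<And>w. A *v w = lam *\<^sub>R w + N *v w"
    and dx: "\<And>t. (x has_vector_derivative A *v x t) (at t)"
  shows "x t = exp (lam * t) *\<^sub>R exp_nil3 N t (x 0)"
proof -
  define z where "z t = exp (- lam * t) *\<^sub>R exp_nil3 N (- t) (x t)" for t
  have z_deriv: "(z has_vector_derivative 0) (at s)" for s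
  proof -
    have "(z has_vector_derivative
            exp (- lam * s) *\<^sub>R exp_nil3 N (- s) (A *v x s - lam *\<^sub>R x s - N *v x s)) (at s)"
      unfolding z_def [abs_def] by (rule has_vector_derivative_exp_nil3_backward[OF N3 dx])
    then show ?thesis
      by (simp add: A_eq exp_nil3_def)
  qed
  obtain c where "\<And>s. s \<in> UNIV \<Longrightarrow> z s = c"
    by (rule has_vector_derivative_zero_constant[of UNIV z]) (auto intro: z_deriv)
  then have "z t = z 0"
    by simp
  have "exp_nil3 N (- t) (x t) = exp (lam * t) *\<^sub>R z t"
    by (simp add: z_def flip: exp_add)
  also have "\<dots> = exp (lam * t) *\<^sub>R x 0"
    using \<open>z t = z 0\<close> by (simp add: z_def)
  finally have "exp_nil3 N (- t) (x t) = exp (lam * t) *\<^sub>R x 0" .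
  then have "exp_nil3 N t (exp_nil3 N (- t) (x t)) = exp (lam * t) *\<^sub>R exp_nil3 N t (x 0)"
    by (simp add: exp_nil3_scaleR)
  then show ?thesis
    by (simp add: exp_nil3_add[OF N3])
qed

lemma exact_scheme_if_step_eq_flow:
  fixes A N :: "real^'n^'n"
  assumes N3: "\<And>w. N *v (N *v (N *v w)) = 0"
    and A_eq: "\<And>w. A *v w = lam *\<^sub>R w + N *v w"
    and step: "\<And>xs k. S xs k \<Longrightarrow> xs (Suc k) = exp (lam * h) *\<^sub>R exp_nil3 N h (xs k)"
  shows "exact_scheme S h A"
  unfolding exact_scheme_def
proof (intro allI impI, elim conjE)
  fix xs and x :: "real \<Rightarrow> real^'n"
  assume S: "\<forall>k. S xs k" and init: "x 0 = xs 0"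
    and dx: "\<forall>t. (x has_vector_derivative A *v x t) (at t)"
  have iterates: "xs k = exp (lam * (k * h)) *\<^sub>R exp_nil3 N (k * h) (xs 0)" for k
  proof (induction k)
    case (Suc k)
    have "xs (Suc k) = exp (lam * h) *\<^sub>R exp_nil3 N h (xs k)"
      using S step by blast
    also have "\<dots> = (exp (lam * h) * exp (lam * (k * h))) *\<^sub>R exp_nil3 N (h + k * h) (xs 0)"
      by (simp only: Suc.IH exp_nil3_scaleR exp_nil3_add[OF N3] scaleR_scaleR)
    also have "exp (lam * h) * exp (lam * (k * h)) = exp (lam * (Suc k * h))"
      by (simp add: distrib_left distrib_right flip: exp_add)
    also have "h + k * h = Suc k * h"
      by (simp add: distrib_right)
    finally show ?case .
  qed simp
  fix k :: nat
  have "x (k * h) = exp (lam * (k * h)) *\<^sub>R exp_nil3 N (k * h) (x 0)"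
    by (rule linear_ode_solution_nilpotent[OF N3 A_eq]) (use dx in blast)
  then show "xs k = x (k * h)"
    using iterates[of k] init by simp
qed

lemma solve_difference_quotient:
  fixes x y r :: "'a::real_vector"
  assumes "\<phi> \<noteq> 0" and "(1 / \<phi>) *\<^sub>R (y - \<psi> *\<^sub>R x) = r"
  shows "y = \<psi> *\<^sub>R x + \<phi> *\<^sub>R r"
proof -
  have "y - \<psi> *\<^sub>R x = \<phi> *\<^sub>R r"
    using assms by (metis eq_vector_fraction_iff scaleR_one)
  then show ?thesis
    by (metis diff_eq_eq add.commute)
qed

lemma scheme_step_eq_flow:
  fixes A N :: "real^'n^'n"
  assumes A_eq: "\<And>w. A *v w = lam *\<^sub>R w + N *v w"
    and coeff0: "\<psi> + \<phi> * lam + \<theta> * \<phi>\<^sup>2 * lam\<^sup>2 = e"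
    and coeff1: "\<phi> + 2 * \<theta> * \<phi>\<^sup>2 * lam = e * h"
    and coeff2: "\<theta> * \<phi>\<^sup>2 = e * (h\<^sup>2 / 2)"
  shows "\<psi> *\<^sub>R v + \<phi> *\<^sub>R (A *v v + (\<theta> * \<phi>) *\<^sub>R (A *v (A *v v))) = e *\<^sub>R exp_nil3 N h v"
proof -
  have "\<psi> *\<^sub>R v + \<phi> *\<^sub>R (A *v v + (\<theta> * \<phi>) *\<^sub>R (A *v (A *v v)))
      = (\<psi> + \<phi> * lam + \<theta> * \<phi>\<^sup>2 * lam\<^sup>2) *\<^sub>R v + (\<phi> + 2 * \<theta> * \<phi>\<^sup>2 * lam) *\<^sub>R (N *v v)
        + (\<theta> * \<phi>\<^sup>2) *\<^sub>R (N *v (N *v v))"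
    by (simp add: A_eq algebra_simps vec_eq_iff power2_eq_square)
  also have "\<dots> = e *\<^sub>R v + (e * h) *\<^sub>R (N *v v) + (e * (h\<^sup>2 / 2)) *\<^sub>R (N *v (N *v v))"
    by (subst coeff0, subst coeff1, subst coeff2) (rule refl)
  also have "\<dots> = e *\<^sub>R exp_nil3 N h v"
    by (simp add: exp_nil3_def algebra_simps)
  finally show ?thesis .
qed

lemma exact_scheme_coefficients:
  fixes lam h :: real
  assumes "h - lam * h\<^sup>2 \<noteq> 0"
    and \<phi>_eq: "\<phi> = (h - lam * h\<^sup>2) * exp (lam * h)"
    and \<theta>_eq: "\<theta> = h\<^sup>2 * exp (lam * h) / (2 * \<phi>\<^sup>2)"
    and \<psi>_eq: "\<psi> = exp (lam * h) - lam * \<phi> - \<theta> * \<phi>\<^sup>2 * lam\<^sup>2"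
  shows "\<psi> + \<phi> * lam + \<theta> * \<phi>\<^sup>2 * lam\<^sup>2 = exp (lam * h)"
    and "\<phi> + 2 * \<theta> * \<phi>\<^sup>2 * lam = exp (lam * h) * h"
    and "\<theta> * \<phi>\<^sup>2 = exp (lam * h) * (h\<^sup>2 / 2)"
proof -
  have "\<phi> \<noteq> 0" using assms(1) by (simp add: \<phi>_eq)
  then show \<theta>\<phi>: "\<theta> * \<phi>\<^sup>2 = exp (lam * h) * (h\<^sup>2 / 2)"
    by (simp add: \<theta>_eq)
  show "\<psi> + \<phi> * lam + \<theta> * \<phi>\<^sup>2 * lam\<^sup>2 = exp (lam * h)"
    by (simp add: \<psi>_eq)
  have "\<phi> + 2 * \<theta> * \<phi>\<^sup>2 * lam = \<phi> + 2 * lam * (\<theta> * \<phi>\<^sup>2)"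
    by simp
  also have "\<dots> = exp (lam * h) * h"
    unfolding \<theta>\<phi> unfolding \<phi>_eq by (simp add: algebra_simps power2_eq_square)
  finally show "\<phi> + 2 * \<theta> * \<phi>\<^sup>2 * lam = exp (lam * h) * h" .
qed

theorem mainTheorem14:
  fixes A :: "real^3^3" and lam h :: real
  assumes char: "charpoly A = [:-lam, 1:] ^ 3"
    and hpos: "h > 0"
    and defined: "lam \<noteq> 0 \<Longrightarrow> h - lam * h^2 \<noteq> 0"
  defines "\<phi> \<equiv> (if lam = 0 then h else (h - lam * h^2) * exp (lam * h))"
    and "\<theta> \<equiv> (if lam = 0 then 1/2 else h^2 * exp (lam * h) / (2 * ((h - lam * h^2) * exp (lam * h))^2))"
    and "\<psi> \<equiv> (if lam = 0 then 1 else exp (lam * h) - lam * ((h - lam * h^2) * exp (lam * h))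
           - (h^2 * exp (lam * h) / (2 * ((h - lam * h^2) * exp (lam * h))^2))
             * ((h - lam * h^2) * exp (lam * h))^2 * lam^2)"
  shows "exact_scheme
           (\<lambda>xs k. (1 / \<phi>) *\<^sub>R (xs (Suc k) - \<psi> *\<^sub>R xs k)
                    = A *v xs k + (\<theta> * \<phi>) *\<^sub>R (A *v (A *v xs k)))
           h A"
proof -
  define N where "N = A - mat lam"
  have A_eq: "A *v w = lam *\<^sub>R w + N *v w" for w
    by (simp add: N_def algebra_simps mat_vector_mult)
  text \<open>For \<open>lam = 0\<close> the general formulas specialise to \<open>\<phi> = h\<close>, \<open>\<theta> = 1/2\<close>, \<open>\<psi> = 1\<close>
    (using \<open>h \<noteq> 0\<close>), so both cases are handled uniformly.\<close>
  have nondegenerate: "h - lam * h\<^sup>2 \<noteq> 0"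
    using hpos defined by (cases "lam = 0") auto
  have \<phi>_eq: "\<phi> = (h - lam * h\<^sup>2) * exp (lam * h)"
    by (simp add: \<phi>_def)
  then have "\<phi> \<noteq> 0"
    using nondegenerate by simp
  have \<theta>_eq: "\<theta> = h\<^sup>2 * exp (lam * h) / (2 * \<phi>\<^sup>2)"
    using hpos by (simp add: \<theta>_def \<phi>_def)
  have \<psi>_eq: "\<psi> = exp (lam * h) - lam * \<phi> - \<theta> * \<phi>\<^sup>2 * lam\<^sup>2"
    by (simp add: \<psi>_def \<theta>_def \<phi>_def)
  note coeffs = exact_scheme_coefficients[OF nondegenerate \<phi>_eq \<theta>_eq \<psi>_eq]
  show ?thesis
  proof (rule exact_scheme_if_step_eq_flow)
    show "N *v (N *v (N *v w)) = 0" for w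
      unfolding N_def by (rule nilpotent_if_charpoly_eq_cube[OF char])
    fix xs k
    assume "(1 / \<phi>) *\<^sub>R (xs (Suc k) - \<psi> *\<^sub>R xs k) = A *v xs k + (\<theta> * \<phi>) *\<^sub>R (A *v (A *v xs k))"
    then have "xs (Suc k) = \<psi> *\<^sub>R xs k + \<phi> *\<^sub>R (A *v xs k + (\<theta> * \<phi>) *\<^sub>R (A *v (A *v xs k)))"
      using \<open>\<phi> \<noteq> 0\<close> solve_difference_quotient by blast
    also have "\<dots> = exp (lam * h) *\<^sub>R exp_nil3 N h (xs k)"
      by (rule scheme_step_eq_flow[OF A_eq coeffs])
    finally show "xs (Suc k) = exp (lam * h) *\<^sub>R exp_nil3 N h (xs k)" .
  qed (fact A_eq)
qed

end
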